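(* Let $\Gamma$ be a rooted Eisenbud–Neumann diagram and $v_i$ a node which is not the root, has no node beyond it, and supports exactly one arrowhead $L_i$ (with near weight $\beta_{i1}$ and multiplicity $n_i$), all other neighbours of $v_i$ except the one towards the root being leaves, attached by edges with near weights $\beta_{i2},\dots,\beta_{ik_i}$. Let $\Gamma'$ (the collapse) be obtained by replacing $v_i$, $L_i$ and these leaves by a single arrowhead $L_i'$ at the end of the edge from the parent, with multiplicity $\beta n_i$, $\beta=\beta_{i2}\cdots\beta_{ik_i}$, all other weights and multiplicities unchanged. Then the linking matrix of $\Gamma$ in the basis $L_1,\dots,L_i,\dots,L_\nu$ equals the linking matrix of $\Gamma'$ in the basis $L_1,\dots,\beta L_i',\dots,L_\nu$ (so the two linking matrices are congruent over $\mathbb Q$). Moreover, if $\Gamma$ satisfies conditions (a) all near weights positive and no far weight zero, (b) negativity of a far weight at $v$ forces negativity of far weights at all nodes beyond $v$, (c) all vertex multiplicities positive, then so does $\Gamma'$.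
   Context: A rooted Eisenbud–Neumann (splice) diagram is a finite tree with a distinguished root vertex, whose vertices are nodes, leaves (valency one, not arrowheads) and arrowhead vertices $L_1,\dots,L_\nu$ carrying multiplicities $n_1,\dots,n_\nu$; at each node every incident edge carries a weight at that node (omitted weights equal $1$). At a node $v$, the weight on the edge leading from $v$ towards the root is the far weight at $v$; the weights at $v$ on the other incident edges are near weights at $v$. A node $w$ is beyond a node $v$ if the geodesic from $w$ to the root contains $v$. For distinct vertices $v,w$, $\mathrm{lk}(v,w)$ is the product of all edge weights adjacent to but not on the geodesic between $v$ and $w$. The multiplicity of a non-arrowhead vertex $v$ is $M_v=\sum_j n_j\,\mathrm{lk}(v,L_j)$. The linking matrix is $(\mathrm{lk}(L_i,L_j))$ with self-linking defined by $\mathrm{lk}(L_i,\sum_jn_jL_j)=0$; linking extends bilinearly to rational combinations of arrowheads. *)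

theory Defs imports Complex_Main begin

text \<open>A rooted Eisenbud-Neumann (splice) diagram: a finite tree (vertex set, symmetric
irreflexive adjacency, unique simple path between any two vertices), a root, a set of
arrowhead vertices, weights (wt v u = weight at node v on the edge {v,u}) and
multiplicities of arrowheads.\<close>

record 'v diagram =
  verts :: "'v set"
  adj :: "'v \<Rightarrow> 'v \<Rightarrow> bool"
  rt :: 'v
  arrows :: "'v set"
  wt :: "'v \<Rightarrow> 'v \<Rightarrow> int"
  amult :: "'v \<Rightarrow> int"

definition nbrs :: "'v diagram \<Rightarrow> 'v \<Rightarrow> 'v set" where
  "nbrs G v = {u \<in> verts G. adj G v u}"

definition is_path :: "'v diagram \<Rightarrow> 'v list \<Rightarrow> 'v \<Rightarrow> 'v \<Rightarrow> bool" where
  "is_path G p u w \<longleftrightarrow> p \<noteq> [] \<and> hd p = u \<and> last p = w \<and> distinct p \<and> set p \<subseteq> verts G \<and>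
     (\<forall>k. Suc k < length p \<longrightarrow> adj G (p ! k) (p ! Suc k))"

definition wf_diagram :: "'v diagram \<Rightarrow> bool" where
  "wf_diagram G \<longleftrightarrow> finite (verts G) \<and>
     (\<forall>u v. adj G u v \<longrightarrow> u \<in> verts G \<and> v \<in> verts G \<and> u \<noteq> v \<and> adj G v u) \<and>
     (\<forall>u\<in>verts G. \<forall>w\<in>verts G. \<exists>!p. is_path G p u w) \<and>
     rt G \<in> verts G \<and> arrows G \<subseteq> verts G \<and>
     (\<forall>a\<in>arrows G. card (nbrs G a) = 1)"

definition leaves :: "'v diagram \<Rightarrow> 'v set" where
  "leaves G = {v \<in> verts G - arrows G. card (nbrs G v) = 1}"

definition nodes :: "'v diagram \<Rightarrow> 'v set" where
  "nodes G = verts G - arrows G - leaves G"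

definition geod :: "'v diagram \<Rightarrow> 'v \<Rightarrow> 'v \<Rightarrow> 'v list" where
  "geod G u w = (THE p. is_path G p u w)"

definition path_edges :: "'v list \<Rightarrow> 'v set set" where
  "path_edges p = {{p ! k, p ! Suc k} | k. Suc k < length p}"

definition lk :: "'v diagram \<Rightarrow> 'v \<Rightarrow> 'v \<Rightarrow> int" where
  "lk G v w = (\<Prod>x\<in>set (geod G v w) \<inter> nodes G.
      \<Prod>u\<in>{u \<in> nbrs G x. {x, u} \<notin> path_edges (geod G v w)}. wt G x u)"

definition parent :: "'v diagram \<Rightarrow> 'v \<Rightarrow> 'v" where
  "parent G v = geod G v (rt G) ! 1"

definition beyond :: "'v diagram \<Rightarrow> 'v \<Rightarrow> 'v \<Rightarrow> bool" where
  "beyond G w v \<longleftrightarrow> v \<in> set (geod G w (rt G))"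

definition far_wt :: "'v diagram \<Rightarrow> 'v \<Rightarrow> int" where
  "far_wt G v = wt G v (parent G v)"

definition near_edge :: "'v diagram \<Rightarrow> 'v \<Rightarrow> 'v \<Rightarrow> bool" where
  "near_edge G v u \<longleftrightarrow> u \<in> nbrs G v \<and> (v = rt G \<or> u \<noteq> parent G v)"

definition vmult :: "'v diagram \<Rightarrow> 'v \<Rightarrow> int" where
  "vmult G v = (\<Sum>j\<in>arrows G. amult G j * lk G v j)"

text \<open>Linking matrix; self-linking from lk(L_a, sum_j n_j L_j) = 0 (division by a zero
multiplicity gives 0 by the HOL convention).\<close>
definition linkmat :: "'v diagram \<Rightarrow> 'v \<Rightarrow> 'v \<Rightarrow> rat" where
  "linkmat G a b = (if a = b
     then - (\<Sum>j\<in>arrows G - {a}. of_int (amult G j * lk G a j)) / of_int (amult G a)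
     else of_int (lk G a b))"

text \<open>Bilinear extension to rational combinations of arrowheads (coefficient functions).\<close>
definition lk_comb :: "'v diagram \<Rightarrow> ('v \<Rightarrow> rat) \<Rightarrow> ('v \<Rightarrow> rat) \<Rightarrow> rat" where
  "lk_comb G f g = (\<Sum>a\<in>arrows G. \<Sum>b\<in>arrows G. f a * g b * linkmat G a b)"

definition condA :: "'v diagram \<Rightarrow> bool" where
  "condA G \<longleftrightarrow> (\<forall>v\<in>nodes G. \<forall>u. near_edge G v u \<longrightarrow> wt G v u > 0) \<and>
                (\<forall>v\<in>nodes G - {rt G}. far_wt G v \<noteq> 0)"

definition condB :: "'v diagram \<Rightarrow> bool" where
  "condB G \<longleftrightarrow> (\<forall>v\<in>nodes G - {rt G}. far_wt G v < 0 \<longrightarrow>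
                  (\<forall>w\<in>nodes G - {rt G}. beyond G w v \<longrightarrow> far_wt G w < 0))"

definition condC :: "'v diagram \<Rightarrow> bool" where
  "condC G \<longleftrightarrow> (\<forall>v\<in>verts G - arrows G. vmult G v > 0)"

definition collapsible :: "'v diagram \<Rightarrow> 'v \<Rightarrow> 'v \<Rightarrow> bool" where
  "collapsible G vi Li \<longleftrightarrow> vi \<in> nodes G \<and> vi \<noteq> rt G \<and>
     (\<forall>w\<in>nodes G. beyond G w vi \<longrightarrow> w = vi) \<and>
     {u \<in> nbrs G vi. u \<in> arrows G} = {Li} \<and>
     (\<forall>u\<in>nbrs G vi - {parent G vi, Li}. u \<in> leaves G)"

definition collapse_beta :: "'v diagram \<Rightarrow> 'v \<Rightarrow> 'v \<Rightarrow> int" where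
  "collapse_beta G vi Li = (\<Prod>u\<in>nbrs G vi - {parent G vi, Li}. wt G vi u)"

text \<open>The collapse: vi, Li and the leaves at vi are replaced by one arrowhead L_i',
which is represented by the vertex vi itself (now an arrowhead of valency one).\<close>
definition collapse :: "'v diagram \<Rightarrow> 'v \<Rightarrow> 'v \<Rightarrow> 'v diagram" where
  "collapse G vi Li = (let R = nbrs G vi - {parent G vi} in
     G\<lparr>verts := verts G - R,
       adj := (\<lambda>x y. adj G x y \<and> x \<notin> R \<and> y \<notin> R),
       arrows := (arrows G - {Li}) \<union> {vi},
       amult := (amult G)(vi := collapse_beta G vi Li * amult G Li)\<rparr>)"

end

theory Submission imports Defs begin

(* Write R for the neighbours of vi other than its parent; the
   collapse G' = collapse G vi Li deletes R and lets vi itself serve as the new arrowhead Li'.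
   1. Pendant vertices never lie in the interior of a path, so paths between vertices of G'
      never meet R.  Hence G' is again a diagram with the same geodesics, nodes (except vi),
      parents, beyond relation and weights as G; conditions (a) and (b) pass to G'.
   2. For a vertex v of G' other than vi, the geodesic from v to Li extends that to vi by the
      edge vi--Li and picks up the leaf weights at vi, so lk G v Li = beta * lk G' v vi, while
      linking numbers to the other arrowheads are unchanged.
   3. Writing arr' j for the arrowhead of G' corresponding to j (arr' Li = vi) and scale j for
      beta (j = Li) or 1, this gives lk G a b = scale a * scale b * lk G' (arr' a) (arr' b)
      and amult G' (arr' j) = scale j * amult G j.  Reindexing the defining sums, the linking matrices
      (self-linking included) and the vertex multiplicities correspond; condition (c) follows.
      When Li is itself the parent of vi (the whole diagram is vi, Li and leaves) the
      multiplicity of the surviving vertex Li is computed directly. *)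

section \<open>Edges of a path\<close>

lemma path_edges_Cons:
  "path_edges (x # ys) = (if ys = [] then {} else insert {x, hd ys} (path_edges ys))"
proof (cases ys)
  case Nil
  then show ?thesis by (simp add: path_edges_def)
next
  case (Cons y zs)
  have "{{(x # ys) ! k, (x # ys) ! Suc k} | k. Suc k < Suc (length ys)}
      = insert {x, y} {{ys ! k, ys ! Suc k} | k. Suc k < length ys}"
  proof (rule set_eqI, rule iffI)
    fix e assume "e \<in> {{(x # ys) ! k, (x # ys) ! Suc k} | k. Suc k < Suc (length ys)}"
    then obtain k where "e = {(x # ys) ! k, (x # ys) ! Suc k}" "Suc k < Suc (length ys)"
      by blast
    then show "e \<in> insert {x, y} {{ys ! k, ys ! Suc k} | k. Suc k < length ys}"
      using Cons by (cases k) auto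
  next
    fix e assume "e \<in> insert {x, y} {{ys ! k, ys ! Suc k} | k. Suc k < length ys}"
    then show "e \<in> {{(x # ys) ! k, (x # ys) ! Suc k} | k. Suc k < Suc (length ys)}"
    proof
      assume "e = {x, y}"
      then show ?thesis using Cons by (intro CollectI exI[of _ 0]) auto
    next
      assume "e \<in> {{ys ! k, ys ! Suc k} | k. Suc k < length ys}"
      then obtain k where "e = {ys ! k, ys ! Suc k}" "Suc k < length ys" by blast
      then show ?thesis by (intro CollectI exI[of _ "Suc k"]) auto
    qed
  qed
  then show ?thesis using Cons by (simp add: path_edges_def)
qed

lemma path_edges_snoc:
  "path_edges (xs @ [y]) = (if xs = [] then {} else insert {last xs, y} (path_edges xs))"
  by (induction xs) (auto simp: path_edges_Cons insert_commute)

lemma path_edges_subset: "e \<in> path_edges xs \<Longrightarrow> e \<subseteq> set xs"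
  unfolding path_edges_def by auto

section \<open>Paths in a graph with symmetric adjacency\<close>

lemma pendant_not_interior:
  assumes sym: "\<forall>a b. adj H a b \<longrightarrow> adj H b a" and p: "is_path H p u w"
    and x: "x \<in> set p" "x \<noteq> u" "x \<noteq> w" and pendant: "card (nbrs H x) = 1"
  shows False
proof -
  obtain k where k: "k < length p" "p ! k = x" by (metis x(1) in_set_conv_nth)
  from p have ne: "p \<noteq> []" and "hd p = u" "last p = w" "distinct p" "set p \<subseteq> verts H"
    and step: "\<forall>k. Suc k < length p \<longrightarrow> adj H (p ! k) (p ! Suc k)"
    unfolding is_path_def by auto
  then have "k \<noteq> 0" "k \<noteq> length p - 1"
    using k x by (metis hd_conv_nth, metis last_conv_nth)
  then have k0: "0 < k" "Suc k < length p" using k by auto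
  have "adj H (p ! (k - 1)) x" using step k0 k by (metis Suc_pred' Suc_lessD)
  then have "adj H x (p ! (k - 1))" using sym by blast
  moreover have "adj H x (p ! Suc k)" using step k0 k by auto
  moreover have "p ! (k - 1) \<noteq> p ! Suc k"
    using \<open>distinct p\<close> k0 by (simp add: nth_eq_iff_index_eq)
  ultimately have "p ! (k - 1) \<in> nbrs H x" "p ! Suc k \<in> nbrs H x" "p ! (k - 1) \<noteq> p ! Suc k"
    using \<open>set p \<subseteq> verts H\<close> k0 nth_mem[of "k - 1" p] nth_mem[of "Suc k" p]
    unfolding nbrs_def by auto
  then show False using pendant by (metis card_1_singletonE singletonD)
qed

lemma is_path_last_edge:
  assumes p: "is_path H p u w" and "u \<noteq> w"
  obtains q where "p = q @ [w]" "q \<noteq> []" "adj H (last q) w"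
proof -
  from p have ne: "p \<noteq> []" and "hd p = u" "last p = w"
    and step: "\<forall>k. Suc k < length p \<longrightarrow> adj H (p ! k) (p ! Suc k)"
    unfolding is_path_def by auto
  define q where "q = butlast p"
  have pq: "p = q @ [w]" using ne \<open>last p = w\<close> q_def by (metis append_butlast_last_id)
  have qne: "q \<noteq> []" using pq \<open>hd p = u\<close> \<open>u \<noteq> w\<close> by auto
  have "Suc (length q - 1) < length p" "Suc (length q - 1) = length q" using pq qne by auto
  then have "adj H (p ! (length q - 1)) (p ! length q)" using step by metis
  then have "adj H (last q) w" using pq qne by (simp add: nth_append last_conv_nth)
  with pq qne show ?thesis using that by blast
qed

lemma is_path_snoc:
  assumes p: "is_path H p u w" and "adj H w z" "z \<in> verts H" "z \<notin> set p"
  shows "is_path H (p @ [z]) u z"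
proof -
  from p have ne: "p \<noteq> []" and "last p = w"
    and step: "\<forall>k. Suc k < length p \<longrightarrow> adj H (p ! k) (p ! Suc k)"
    unfolding is_path_def by auto
  have "adj H ((p @ [z]) ! k) ((p @ [z]) ! Suc k)" if "Suc k < length (p @ [z])" for k
  proof (cases "Suc k < length p")
    case True
    then show ?thesis using step by (simp add: nth_append)
  next
    case False
    then have "k = length p - 1" using that by simp
    then have "(p @ [z]) ! k = w" "(p @ [z]) ! Suc k = z"
      using ne \<open>last p = w\<close> by (auto simp: nth_append last_conv_nth)
    then show ?thesis using \<open>adj H w z\<close> by simp
  qed
  then show ?thesis using p assms(3,4) unfolding is_path_def by auto
qed

lemma is_path_rev:
  assumes sym: "\<forall>a b. adj H a b \<longrightarrow> adj H b a" and p: "is_path H p u w"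
  shows "is_path H (rev p) w u"
proof -
  from p have step: "\<forall>k. Suc k < length p \<longrightarrow> adj H (p ! k) (p ! Suc k)"
    unfolding is_path_def by auto
  have "adj H (rev p ! k) (rev p ! Suc k)" if "Suc k < length p" for k
  proof -
    have "adj H (p ! (length p - Suc (Suc k))) (p ! Suc (length p - Suc (Suc k)))"
      using step that by auto
    moreover have "Suc (length p - Suc (Suc k)) = length p - Suc k" using that by auto
    ultimately show ?thesis using sym that by (simp add: rev_nth)
  qed
  then show ?thesis using p unfolding is_path_def by (auto simp: hd_rev last_rev)
qed

lemma path_to_star_centre:
  assumes sym: "\<forall>a b. adj H a b \<longrightarrow> adj H b a" and p: "is_path H p v x" and "v \<noteq> x"
    and pendant: "\<And>y. y \<in> nbrs H x \<Longrightarrow> card (nbrs H y) = 1"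
  shows "v \<in> nbrs H x"
proof -
  obtain q where pq: "p = q @ [x]" and "q \<noteq> []" and e: "adj H (last q) x"
    using is_path_last_edge[OF p \<open>v \<noteq> x\<close>] .
  have "last q \<in> set p" using pq \<open>q \<noteq> []\<close> by simp
  then have y: "last q \<in> nbrs H x" using e sym p unfolding is_path_def nbrs_def by blast
  have "last q \<noteq> x" using p pq \<open>q \<noteq> []\<close> unfolding is_path_def by auto
  then have "last q = v"
    using pendant_not_interior[OF sym p \<open>last q \<in> set p\<close> _ _ pendant[OF y]] by blast
  then show ?thesis using y by simp
qed

section \<open>Geodesics and linking numbers in a diagram\<close>

lemma wf_diagramD:
  assumes "wf_diagram G"
  shows wf_finite: "finite (verts G)"
    and wf_adj: "\<And>u v. adj G u v \<Longrightarrow> u \<in> verts G \<and> v \<in> verts G \<and> u \<noteq> v"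
    and wf_sym: "\<forall>u v. adj G u v \<longrightarrow> adj G v u"
    and wf_unique_path: "\<And>u w. u \<in> verts G \<Longrightarrow> w \<in> verts G \<Longrightarrow> \<exists>!p. is_path G p u w"
    and wf_root: "rt G \<in> verts G"
    and wf_arrows: "arrows G \<subseteq> verts G"
    and wf_arrow_pendant: "\<And>a. a \<in> arrows G \<Longrightarrow> card (nbrs G a) = 1"
  using assms unfolding wf_diagram_def by blast+

lemma geod_is_path:
  assumes "wf_diagram G" "u \<in> verts G" "w \<in> verts G"
  shows "is_path G (geod G u w) u w"
  unfolding geod_def using theI'[OF wf_unique_path[OF assms]] .

lemma geod_eqI:
  assumes G: "wf_diagram G" and p: "is_path G p u w"
  shows "geod G u w = p"
proof -
  from p have "u \<in> verts G" "w \<in> verts G"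
    unfolding is_path_def by (metis hd_in_set last_in_set subsetD)+
  then show ?thesis
    unfolding geod_def using p by (rule the1_equality[OF wf_unique_path[OF G]])
qed

lemma geod_rev:
  assumes "wf_diagram G" "u \<in> verts G" "w \<in> verts G"
  shows "geod G w u = rev (geod G u w)"
  using geod_eqI[OF assms(1) is_path_rev[OF wf_sym[OF assms(1)] geod_is_path[OF assms]]] .

text \<open>The linking number is symmetric, since reversing a path keeps its edges.\<close>
lemma lk_sym:
  assumes "wf_diagram G" "u \<in> verts G" "w \<in> verts G"
  shows "lk G w u = lk G u w"
proof -
  have "path_edges (rev xs) = path_edges xs" for xs :: "'a list"
    by (induction xs) (auto simp: path_edges_Cons path_edges_snoc last_rev insert_commute)
  then show ?thesis unfolding lk_def geod_rev[OF assms] by simp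
qed

lemma lk_comb_point_masses:
  assumes "finite (arrows G)" "c \<in> arrows G" "d \<in> arrows G"
  shows "lk_comb G (\<lambda>x. if x = c then s else 0) (\<lambda>x. if x = d then t else 0)
       = s * t * linkmat G c d"
proof -
  have "lk_comb G (\<lambda>x. if x = c then s else 0) (\<lambda>x. if x = d then t else 0)
      = (\<Sum>x\<in>arrows G. if x = c then (\<Sum>y\<in>arrows G. if y = d then s * t * linkmat G x y else 0)
                        else 0)"
    unfolding lk_comb_def by (rule sum.cong[OF refl]) (auto intro: sum.cong)
  also have "\<dots> = s * t * linkmat G c d" using assms by simp
  finally show ?thesis .
qed

section \<open>The collapse of a terminal node\<close>

locale terminal_collapse =
  fixes G :: "'v diagram" and vi Li :: 'v
  assumes wf: "wf_diagram G" and col: "collapsible G vi Li"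
begin

abbreviation "G' \<equiv> collapse G vi Li"
abbreviation "par \<equiv> parent G vi"
abbreviation "\<beta> \<equiv> collapse_beta G vi Li"

abbreviation "R \<equiv> nbrs G vi - {par}"

text \<open>The arrowhead of G' corresponding to an arrowhead of G, and the scale factor between
  the two (the new arrowhead vi stands for beta times Li).\<close>
abbreviation "arr' j \<equiv> if j = Li then vi else j"
abbreviation "scale j \<equiv> if j = Li then \<beta> else 1"

lemma collapse_simps:
  "verts G' = verts G - R" "adj G' = (\<lambda>x y. adj G x y \<and> x \<notin> R \<and> y \<notin> R)"
  "arrows G' = insert vi (arrows G - {Li})" "amult G' = (amult G)(vi := \<beta> * amult G Li)"
  "rt G' = rt G" "wt G' = wt G"
  unfolding collapse_def Let_def by auto

lemma vi_node: "vi \<in> nodes G" "vi \<noteq> rt G"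
  using col unfolding collapsible_def by auto

lemma vi_vert: "vi \<in> verts G" and vi_not_arrow: "vi \<notin> arrows G"
  using vi_node unfolding nodes_def by auto

lemma Li_arrow: "Li \<in> arrows G" "Li \<in> nbrs G vi"
  using col unfolding collapsible_def by blast+

lemma Li_not_node: "Li \<notin> nodes G"
  using Li_arrow unfolding nodes_def by auto

lemma removed_cases: "u \<in> R \<Longrightarrow> u = Li \<or> u \<in> leaves G"
  using col unfolding collapsible_def by blast

lemma removed_pendant: "u \<in> R \<Longrightarrow> card (nbrs G u) = 1"
  using removed_cases wf_arrow_pendant[OF wf] Li_arrow unfolding leaves_def by blast

lemma removed_adj: "u \<in> R \<Longrightarrow> adj G x u \<Longrightarrow> x = vi"
proof -
  assume u: "u \<in> R" and "adj G x u"
  then have "vi \<in> nbrs G u" "x \<in> nbrs G u"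
    using wf_sym[OF wf] wf_adj[OF wf] unfolding nbrs_def by auto
  then show "x = vi" using removed_pendant[OF u] by (metis card_1_singletonE singletonD)
qed

lemma parent_nbr: "par \<in> nbrs G vi"
proof -
  define p where "p = geod G vi (rt G)"
  have "is_path G p vi (rt G)" using geod_is_path[OF wf vi_vert wf_root[OF wf]] p_def by simp
  then have ne: "p \<noteq> []" and first: "p ! 0 = vi" and last: "last p = rt G"
    and step: "\<forall>k. Suc k < length p \<longrightarrow> adj G (p ! k) (p ! Suc k)"
    unfolding is_path_def by (auto simp: hd_conv_nth)
  have "1 < length p"
  proof (rule ccontr)
    assume "\<not> 1 < length p"
    then have "length p = 1" using ne by (simp add: not_less le_Suc_eq)
    then show False using first last vi_node(2) ne by (metis diff_self_eq_0 last_conv_nth)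
  qed
  then have "adj G vi (p ! 1)" using step first by (metis One_nat_def)
  then show ?thesis unfolding parent_def p_def[symmetric] nbrs_def using wf_adj[OF wf] by blast
qed

lemma vi_not_removed: "vi \<notin> R"
  using wf_adj[OF wf] unfolding nbrs_def by auto

text \<open>The root survives: otherwise it would be adjacent to vi and hence the parent.\<close>
lemma root_not_removed: "rt G \<notin> R"
proof
  assume r: "rt G \<in> R"
  then have "is_path G [vi, rt G] vi (rt G)"
    using vi_node(2) vi_vert unfolding is_path_def nbrs_def by (auto simp: less_Suc_eq)
  then have "par = rt G" unfolding parent_def using geod_eqI[OF wf] by simp
  then show False using r by simp
qed

lemma arrow_survives: "a \<in> arrows G \<Longrightarrow> a \<noteq> Li \<Longrightarrow> a \<in> verts G' \<and> a \<noteq> vi"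
  using removed_cases[of a] wf_arrows[OF wf] vi_not_arrow
  unfolding leaves_def by (auto simp: collapse_simps)

lemma nbrs_collapse: "x \<in> verts G' \<Longrightarrow> x \<noteq> vi \<Longrightarrow> nbrs G' x = nbrs G x"
  using removed_adj unfolding nbrs_def collapse_simps by auto

lemma nbrs_collapse_vi: "nbrs G' vi = {par}"
  using vi_not_removed parent_nbr unfolding nbrs_def collapse_simps by auto

text \<open>Paths between surviving vertices never pass through a removed (pendant) vertex.\<close>
lemma is_path_collapse:
  assumes "u \<in> verts G'" "w \<in> verts G'"
  shows "is_path G' p u w \<longleftrightarrow> is_path G p u w"
proof
  assume "is_path G' p u w"
  then show "is_path G p u w" unfolding is_path_def collapse_simps by auto
next
  assume p: "is_path G p u w"
  have avoid: "x \<notin> R" if "x \<in> set p" for x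
  proof
    assume x: "x \<in> R"
    then have "x \<noteq> u" "x \<noteq> w" using assms by (auto simp: collapse_simps)
    then show False
      using pendant_not_interior[OF wf_sym[OF wf] p that] removed_pendant[OF x] by blast
  qed
  have "Suc k < length p \<Longrightarrow> p ! k \<in> set p \<and> p ! Suc k \<in> set p" for k by simp
  then show "is_path G' p u w" using p avoid unfolding is_path_def collapse_simps by auto
qed

lemma collapse_wf: "wf_diagram G'"
proof -
  have fin: "finite (verts G')" using wf_finite[OF wf] by (simp add: collapse_simps)
  have adj: "\<forall>u v. adj G' u v \<longrightarrow> u \<in> verts G' \<and> v \<in> verts G' \<and> u \<noteq> v \<and> adj G' v u"
    using wf_adj[OF wf] wf_sym[OF wf] by (auto simp: collapse_simps)
  have paths: "\<forall>u\<in>verts G'. \<forall>w\<in>verts G'. \<exists>!p. is_path G' p u w"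
    using is_path_collapse wf_unique_path[OF wf] by (simp add: collapse_simps)
  have root: "rt G' \<in> verts G'"
    using wf_root[OF wf] root_not_removed by (simp add: collapse_simps)
  have arrows: "arrows G' \<subseteq> verts G'"
    using arrow_survives vi_vert vi_not_removed by (auto simp: collapse_simps)
  have pendant: "\<forall>a\<in>arrows G'. card (nbrs G' a) = 1"
    using nbrs_collapse_vi nbrs_collapse arrow_survives wf_arrow_pendant[OF wf]
    by (auto simp: collapse_simps)
  show ?thesis unfolding wf_diagram_def by (intro conjI fin adj paths root arrows pendant)
qed

lemma geod_collapse:
  assumes "u \<in> verts G'" "w \<in> verts G'"
  shows "geod G' u w = geod G u w"
proof (rule geod_eqI[OF collapse_wf])
  have "u \<in> verts G" "w \<in> verts G" using assms by (auto simp: collapse_simps)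
  then show "is_path G' (geod G u w) u w"
    using is_path_collapse[OF assms] geod_is_path[OF wf] by blast
qed

lemma vi_vert_collapse: "vi \<in> verts G'"
  using vi_vert vi_not_removed by (simp add: collapse_simps)

lemma root_vert_collapse: "rt G \<in> verts G'"
  using wf_root[OF wf] root_not_removed by (simp add: collapse_simps)

lemma nodes_collapse: "nodes G' = nodes G - {vi}"
proof (rule set_eqI, rule iffI)
  fix x assume x: "x \<in> nodes G'"
  then have "x \<in> verts G'" "x \<noteq> vi" "x \<notin> arrows G - {Li}" "card (nbrs G' x) \<noteq> 1"
    unfolding nodes_def leaves_def by (auto simp: collapse_simps)
  then show "x \<in> nodes G - {vi}"
    using nbrs_collapse wf_arrow_pendant[OF wf]
    unfolding nodes_def leaves_def by (auto simp: collapse_simps)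
next
  fix x assume x: "x \<in> nodes G - {vi}"
  then have "x \<in> verts G'"
    using removed_cases Li_arrow unfolding nodes_def by (auto simp: collapse_simps)
  then show "x \<in> nodes G'"
    using x nbrs_collapse unfolding nodes_def leaves_def by (auto simp: collapse_simps)
qed

lemma node_vert_collapse: "v \<in> nodes G' \<Longrightarrow> v \<in> verts G'"
  unfolding nodes_def by auto

lemma parent_collapse: "v \<in> verts G' \<Longrightarrow> parent G' v = parent G v"
  unfolding parent_def using geod_collapse root_vert_collapse by (simp add: collapse_simps)

lemma beyond_collapse: "w \<in> verts G' \<Longrightarrow> beyond G' w v = beyond G w v"
  unfolding beyond_def using geod_collapse root_vert_collapse by (simp add: collapse_simps)

lemma near_edge_collapse: "v \<in> nodes G' \<Longrightarrow> near_edge G' v u = near_edge G v u"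
  unfolding near_edge_def
  using node_vert_collapse nbrs_collapse parent_collapse nodes_collapse
  by (auto simp: collapse_simps)

lemma far_wt_collapse: "v \<in> nodes G' \<Longrightarrow> far_wt G' v = far_wt G v"
  unfolding far_wt_def using node_vert_collapse parent_collapse by (auto simp: collapse_simps)

text \<open>Unless the diagram consists of vi, Li and leaves only, Li is not the parent of vi
  and is therefore removed by the collapse.\<close>
lemma Li_removed:
  assumes v: "v \<in> verts G" "v \<notin> R" "v \<noteq> vi" "v \<noteq> Li"
  shows "Li \<in> R"
proof (rule ccontr)
  assume "Li \<notin> R"
  then have Lp: "Li = par" using Li_arrow by auto
  have "card (nbrs G y) = 1" if "y \<in> nbrs G vi" for y
    using removed_pendant wf_arrow_pendant[OF wf] Li_arrow that Lp by (cases "y = par") auto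
  then have "v \<in> nbrs G vi"
    using path_to_star_centre[OF wf_sym[OF wf] geod_is_path[OF wf v(1) vi_vert] v(3)] by blast
  then show False using v Lp by auto
qed

lemma lk_collapse_surviving:
  assumes v: "v \<in> verts G'" "v \<noteq> vi" and j: "j \<in> verts G'" "j \<noteq> vi"
  shows "lk G' v j = lk G v j"
proof -
  have P: "is_path G' (geod G v j) v j"
    using geod_is_path[OF collapse_wf v(1) j(1)] geod_collapse[OF v(1) j(1)] by simp
  then have "vi \<notin> set (geod G v j)"
    using pendant_not_interior[OF wf_sym[OF collapse_wf] P, of vi] v j nbrs_collapse_vi by auto
  moreover have "set (geod G v j) \<subseteq> verts G'" using P unfolding is_path_def by auto
  ultimately show ?thesis
    unfolding lk_def geod_collapse[OF v(1) j(1)] nodes_collapse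
    using nbrs_collapse by (intro prod.cong) (auto simp: collapse_simps)
qed

lemma geod_to_Li:
  assumes v: "v \<in> verts G'" "v \<noteq> vi" and LR: "Li \<in> R"
  obtains P0 where "geod G v vi = P0 @ [vi]" "geod G v Li = P0 @ [vi, Li]"
    "P0 \<noteq> []" "last P0 = par" "vi \<notin> set P0" "set P0 \<subseteq> verts G'"
proof -
  define P where "P = geod G v vi"
  have PG': "is_path G' P v vi"
    using geod_is_path[OF collapse_wf v(1) vi_vert_collapse] geod_collapse[OF v(1)]
      vi_vert_collapse P_def by simp
  have PG: "is_path G P v vi" using is_path_collapse[OF v(1) vi_vert_collapse] PG' by simp
  obtain P0 where PP: "P = P0 @ [vi]" "P0 \<noteq> []" and e: "adj G' (last P0) vi"
    using is_path_last_edge[OF PG' v(2)] .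
  have "last P0 = par"
    using e wf_sym[OF collapse_wf] wf_adj[OF collapse_wf] nbrs_collapse_vi
    unfolding nbrs_def by blast
  moreover have "vi \<notin> set P0" "set P0 \<subseteq> verts G'"
    using PG' PP unfolding is_path_def by auto
  moreover have "Li \<notin> set P" using PG' LR unfolding is_path_def by (auto simp: collapse_simps)
  then have "geod G v Li = P0 @ [vi, Li]"
    using geod_eqI[OF wf is_path_snoc[OF PG]] Li_arrow wf_arrows[OF wf] PP(1)
    unfolding nbrs_def by auto
  ultimately show ?thesis using that[of P0] PP P_def by simp
qed

text \<open>The geodesic to Li picks up, at vi, the weights towards the leaves, i.e. beta; at the
  other nodes it sees the same weights as the geodesic to vi in G'.\<close>
lemma lk_to_Li:
  assumes v: "v \<in> verts G'" "v \<noteq> vi" and LR: "Li \<in> R"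
  shows "lk G v Li = \<beta> * lk G' v vi"
proof -
  obtain P0 where geod_vi: "geod G v vi = P0 @ [vi]" and geod_Li: "geod G v Li = P0 @ [vi, Li]"
    and P0: "P0 \<noteq> []" "last P0 = par" "vi \<notin> set P0" "set P0 \<subseteq> verts G'"
    using geod_to_Li[OF v LR] .
  have edges_vi: "path_edges (P0 @ [vi]) = insert {par, vi} (path_edges P0)"
    using P0 by (simp add: path_edges_snoc)
  have edges_Li: "path_edges (P0 @ [vi, Li]) = insert {vi, Li} (path_edges (P0 @ [vi]))"
    using path_edges_snoc[of "P0 @ [vi]" Li] by simp
  have vi_factor: "{u \<in> nbrs G vi. {vi, u} \<notin> path_edges (P0 @ [vi, Li])} = nbrs G vi - {par, Li}"
    unfolding edges_Li edges_vi using path_edges_subset P0(3)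
    by (fastforce simp: doubleton_eq_iff)
  have other_factors:
    "(\<Prod>u\<in>{u \<in> nbrs G x. {x, u} \<notin> path_edges (P0 @ [vi, Li])}. wt G x u)
     = (\<Prod>u\<in>{u \<in> nbrs G' x. {x, u} \<notin> path_edges (P0 @ [vi])}. wt G' x u)"
    if x: "x \<in> set P0 \<inter> nodes G" for x
  proof -
    have "x \<in> verts G'" "x \<noteq> vi" "x \<noteq> Li" using x P0 Li_not_node by auto
    then show ?thesis using nbrs_collapse unfolding edges_Li
      by (auto simp: collapse_simps doubleton_eq_iff)
  qed
  have nodes_vi: "set (P0 @ [vi]) \<inter> nodes G' = set P0 \<inter> nodes G"
    using P0(3) nodes_collapse by auto
  have "set (P0 @ [vi, Li]) \<inter> nodes G = insert vi (set P0 \<inter> nodes G)"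
    using Li_not_node vi_node by auto
  then have "lk G v Li = \<beta> * (\<Prod>x\<in>set P0 \<inter> nodes G.
      \<Prod>u\<in>{u \<in> nbrs G x. {x, u} \<notin> path_edges (P0 @ [vi, Li])}. wt G x u)"
    unfolding lk_def geod_Li collapse_beta_def using P0(3) vi_factor by simp
  also have "\<dots> = \<beta> * lk G' v vi"
    unfolding lk_def geod_collapse[OF v(1) vi_vert_collapse] geod_vi nodes_vi
    using other_factors by simp
  finally show ?thesis .
qed

lemma lk_to_arrow:
  assumes v: "v \<in> verts G'" "v \<noteq> vi" and j: "j \<in> arrows G" and LR: "Li \<in> R"
  shows "lk G v j = scale j * lk G' v (arr' j)"
  using lk_to_Li[OF v LR] lk_collapse_surviving[OF v] arrow_survives[OF j] by auto

lemma lk_between_arrows: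
  assumes a: "a \<in> arrows G" and b: "b \<in> arrows G" and "a \<noteq> b"
  shows "lk G a b = scale a * scale b * lk G' (arr' a) (arr' b)"
proof (cases "a = Li")
  case False
  have "a \<in> verts G'" "a \<noteq> vi" using arrow_survives[OF a False] by auto
  moreover have "Li \<in> R"
    using Li_removed calculation False by (auto simp: collapse_simps)
  ultimately show ?thesis using lk_to_arrow[OF _ _ b] False by simp
next
  case True
  then have b': "b \<in> verts G'" "b \<noteq> vi" "b \<noteq> Li" using arrow_survives[OF b] \<open>a \<noteq> b\<close> by auto
  have LR: "Li \<in> R" using Li_removed b' by (auto simp: collapse_simps)
  have "lk G Li b = lk G b Li"
    using lk_sym[OF wf] b' Li_arrow wf_arrows[OF wf] by (auto simp: collapse_simps)
  moreover have "lk G' vi b = lk G' b vi"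
    using lk_sym[OF collapse_wf b'(1) vi_vert_collapse] .
  ultimately show ?thesis using lk_to_Li[OF b'(1,2) LR] True b'(3) by simp
qed

lemma amult_collapse: "j \<in> arrows G \<Longrightarrow> amult G' (arr' j) = scale j * amult G j"
  using vi_not_arrow by (auto simp: collapse_simps)

lemma arrows_collapse_image:
  "arr' ` arrows G = arrows G'"
  "a \<in> arrows G \<Longrightarrow> arr' ` (arrows G - {a}) = arrows G' - {arr' a}"
  using vi_not_arrow Li_arrow by (auto simp: collapse_simps)

lemma sum_arrows_collapse:
  assumes "A \<subseteq> arrows G"
  shows "(\<Sum>k\<in>arr' ` A. f k) = (\<Sum>j\<in>A. f (arr' j))"
proof (rule sum.reindex[unfolded comp_def])
  show "inj_on arr' A" using assms vi_not_arrow by (auto simp: inj_on_def)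
qed

lemma linkmat_collapse:
  assumes a: "a \<in> arrows G" and b: "b \<in> arrows G"
  shows "linkmat G a b = of_int (scale a * scale b) * linkmat G' (arr' a) (arr' b)"
proof (cases "a = b")
  case False
  then have "arr' a \<noteq> arr' b" using a b vi_not_arrow by auto
  then show ?thesis
    using False lk_between_arrows[OF a b False] unfolding linkmat_def by simp
next
  case True
  define \<sigma> where "\<sigma> = scale a"
  define S where "S = (\<Sum>k\<in>arrows G' - {arr' a}. of_int (amult G' k * lk G' (arr' a) k) :: rat)"
  have "(\<Sum>j\<in>arrows G - {a}. of_int (amult G j * lk G a j) :: rat) = of_int \<sigma> * S"
    unfolding S_def \<sigma>_def arrows_collapse_image(2)[OF a, symmetric] sum_distrib_left
      sum_arrows_collapse[OF Diff_subset]
    using lk_between_arrows[OF a] amult_collapse by (intro sum.cong) auto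
  then have lG: "linkmat G a a = - (of_int \<sigma> * S) / of_int (amult G a)"
    unfolding linkmat_def by simp
  have lG': "linkmat G' (arr' a) (arr' a) = - S / (of_int \<sigma> * of_int (amult G a))"
    unfolding linkmat_def S_def \<sigma>_def amult_collapse[OF a] by simp
  have rescale: "- (x * S) / m = x * x * (- S / (x * m))" for x m :: rat
    by (cases "x = 0"; cases "m = 0") (simp_all add: field_simps)
  have "linkmat G a a = of_int (\<sigma> * \<sigma>) * linkmat G' (arr' a) (arr' a)"
    unfolding lG lG' of_int_mult by (rule rescale)
  then show ?thesis using True unfolding \<sigma>_def by simp
qed

lemma linkmat_as_lk_comb:
  assumes a: "a \<in> arrows G" and b: "b \<in> arrows G"
  shows "linkmat G a b = lk_comb G' (\<lambda>x. if x = arr' a then of_int (scale a) else 0)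
                                    (\<lambda>x. if x = arr' b then of_int (scale b) else 0)"
proof -
  have fin: "finite (arrows G')" using wf_arrows[OF collapse_wf] wf_finite[OF collapse_wf]
    by (rule finite_subset)
  have arr: "arr' c \<in> arrows G'" if "c \<in> arrows G" for c
    using that by (simp add: collapse_simps)
  show ?thesis
    unfolding lk_comb_point_masses[OF fin arr[OF a] arr[OF b]] linkmat_collapse[OF a b] by simp
qed

lemma vmult_collapse:
  assumes v: "v \<in> verts G'" "v \<notin> arrows G'" "v \<noteq> Li"
  shows "vmult G' v = vmult G v"
proof -
  have v': "v \<noteq> vi" "v \<in> verts G" "v \<notin> R" using v by (auto simp: collapse_simps)
  have LR: "Li \<in> R" using Li_removed v' v(3) by blast
  have "vmult G' v = (\<Sum>j\<in>arrows G. amult G' (arr' j) * lk G' v (arr' j))"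
    unfolding vmult_def arrows_collapse_image(1)[symmetric] by (rule sum_arrows_collapse) simp
  also have "\<dots> = vmult G v"
    unfolding vmult_def using amult_collapse lk_to_arrow[OF v(1) v'(1) _ LR]
    by (intro sum.cong) auto
  finally show ?thesis .
qed

text \<open>If Li survives, it is the root, the diagram consists of vi, Li and leaves, and the
  multiplicity of Li in G' equals that of vi in G.\<close>
lemma vmult_collapse_Li:
  assumes L: "Li \<in> verts G'"
  shows "vmult G' Li = vmult G vi"
proof -
  have LR: "Li \<notin> R" using L by (simp add: collapse_simps)
  have "j = Li" if j: "j \<in> arrows G" for j
  proof (rule ccontr)
    assume "j \<noteq> Li"
    then have "j \<in> verts G" "j \<notin> R" "j \<noteq> vi"
      using arrow_survives[OF j] by (auto simp: collapse_simps)
    then show False using Li_removed LR \<open>j \<noteq> Li\<close> by blast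
  qed
  then have arrows: "arrows G = {Li}" using Li_arrow by blast
  then have arrows': "arrows G' = {vi}" by (simp add: collapse_simps)
  have Lp: "Li = par" using LR Li_arrow by auto
  have LG: "Li \<in> verts G" using Li_arrow wf_arrows[OF wf] by auto
  have "is_path G [vi, Li] vi Li"
    using vi_vert LG vi_not_arrow Li_arrow unfolding is_path_def nbrs_def
    by (auto simp: less_Suc_eq)
  then have g: "geod G vi Li = [vi, Li]" using geod_eqI[OF wf] by blast
  have "set [vi, Li] \<inter> nodes G = {vi}" using vi_node Li_not_node by auto
  moreover have "{u \<in> nbrs G vi. {vi, u} \<notin> path_edges [vi, Li]} = nbrs G vi - {par, Li}"
    using Lp by (auto simp: path_edges_Cons doubleton_eq_iff)
  ultimately have "lk G vi Li = \<beta>" unfolding lk_def g collapse_beta_def by simp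
  moreover have "geod G' Li vi = [Li, vi]"
    using geod_collapse[OF L vi_vert_collapse] geod_rev[OF wf vi_vert LG] g by simp
  then have "lk G' Li vi = 1" using nodes_collapse Li_not_node unfolding lk_def by auto
  ultimately show ?thesis unfolding vmult_def arrows arrows' by (simp add: collapse_simps)
qed

lemma conditions_collapse:
  assumes "condA G" "condB G" "condC G"
  shows "condA G' \<and> condB G' \<and> condC G'"
proof (intro conjI)
  have node: "v \<in> nodes G' \<Longrightarrow> v \<in> nodes G" for v using nodes_collapse by auto
  show "condA G'"
    using assms(1) node node_vert_collapse near_edge_collapse far_wt_collapse
    unfolding condA_def by (auto simp: collapse_simps)
  show "condB G'"
    using assms(2) node node_vert_collapse far_wt_collapse beyond_collapse
    unfolding condB_def by (auto simp: collapse_simps)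
  have "vmult G' v > 0" if v: "v \<in> verts G' - arrows G'" for v
  proof (cases "v = Li")
    case True
    then show ?thesis using vmult_collapse_Li v assms(3) vi_vert vi_not_arrow
      unfolding condC_def by auto
  next
    case False
    then show ?thesis using vmult_collapse v assms(3)
      unfolding condC_def by (auto simp: collapse_simps)
  qed
  then show "condC G'" unfolding condC_def by blast
qed

end

theorem lemma3p17:
  fixes G :: "'v diagram" and vi Li :: 'v
  assumes "wf_diagram G"
    and "collapsible G vi Li"
  shows "(\<forall>a\<in>arrows G. \<forall>b\<in>arrows G.
            linkmat G a b =
            lk_comb (collapse G vi Li)
              (if a = Li then (\<lambda>x. if x = vi then of_int (collapse_beta G vi Li) else 0)
               else (\<lambda>x. if x = a then 1 else 0))
              (if b = Li then (\<lambda>x. if x = vi then of_int (collapse_beta G vi Li) else 0)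
               else (\<lambda>x. if x = b then 1 else 0)))
       \<and> (condA G \<and> condB G \<and> condC G \<longrightarrow>
            condA (collapse G vi Li) \<and> condB (collapse G vi Li) \<and> condC (collapse G vi Li))"
proof -
  interpret terminal_collapse G vi Li using assms by unfold_locales
  have point_mass: "(if c = Li then (\<lambda>x. if x = vi then of_int \<beta> else 0)
                     else (\<lambda>x. if x = c then 1 else 0))
      = (\<lambda>x. if x = arr' c then of_int (scale c) else 0 :: rat)" for c
    by auto
  have "linkmat G a b = lk_comb G'
      (if a = Li then (\<lambda>x. if x = vi then of_int \<beta> else 0) else (\<lambda>x. if x = a then 1 else 0))
      (if b = Li then (\<lambda>x. if x = vi then of_int \<beta> else 0) else (\<lambda>x. if x = b then 1 else 0))"
    if "a \<in> arrows G" "b \<in> arrows G" for a b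
    unfolding point_mass by (rule linkmat_as_lk_comb[OF that])
  then show ?thesis using conditions_collapse by blast
qed

end
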